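(* Let $W:\mathbb{T}\to(-\infty,\infty]$ satisfy (H1)–(H4) and let $U$ be a function on $\mathbb{T}$ bounded from below. Let $\rho$ be a Borel probability measure on $\mathbb{T}$, $x_0\in\mathbb{T}$, $0<\epsilon<1/2$. Suppose there is $c>0$ with $V_U[\rho](x)\ge\operatorname{ess\,inf}V_U[\rho]+c$ (the left side possibly $+\infty$) for all $x\in[x_0-\epsilon,x_0+\epsilon]$, and $\operatorname{supp}\rho\cap(x_0-\epsilon/2,x_0+\epsilon/2)\ne\emptyset$. Define $$\rho_\lambda=\rho+\lambda\big(m_1\delta_{x_0-\epsilon}+m_2\delta_{x_0+\epsilon}-\rho|_{(x_0-\epsilon,x_0+\epsilon)}\big),$$ where $m_1,m_2>0$ are determined by the moment conditions $\int_{(-\epsilon,\epsilon)}u^k\,d\big(m_1\delta_{-\epsilon}+m_2\delta_{\epsilon}-\tau\big)(u)=0$ for $k=0,1$, with $\tau$ the translate of $\rho|_{(x_0-\epsilon,x_0+\epsilon)}$ by $-x_0$ (viewed on the real interval $(-\epsilon,\epsilon)$). Then for all sufficiently small $\lambda>0$, $\rho_\lambda$ is a probability measure and $$-\operatorname{ess\,inf}V_U[\rho_\lambda]<-\operatorname{ess\,inf}V_U[\rho].$$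
   Context: $\mathbb{T}=\mathbb{R}/\mathbb{Z}$. Hypotheses: (H1) $W\in L^1(\mathbb{T})\cap C^2(\mathbb{T}\setminus\{0\})$, $\int_{\mathbb{T}}W=0$; (H2) $W$ even; (H3) $\lim_{x\to0}W(x)=W(0)=\infty$; (H4) $W''\ge C_1>0$ on $\mathbb{T}\setminus\{0\}$. $V_U[\rho]=U+W*\rho$ with $(W*\rho)(x)=\int W(x-y)\,d\rho(y)$; essential infima are with respect to Lebesgue measure; $\rho|_A$ denotes restriction of $\rho$ to $A$. *)

theory Defs
  imports "HOL-Probability.Probability"
begin

text \<open>The torus T = R/Z is modelled by 1-periodic functions on the reals; a Borel
  measure on T is a Borel measure on the reals concentrated on [0,1).\<close>

definition isTprob :: "real measure \<Rightarrow> bool" where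
  "isTprob \<mu> \<longleftrightarrow> prob_space \<mu> \<and> sets \<mu> = sets borel \<and> emeasure \<mu> (UNIV - {0..<1}) = 0"

text \<open>Representative in [-1/2,1/2] of y - x0 on the circle.\<close>
definition liftT :: "real \<Rightarrow> real \<Rightarrow> real" where
  "liftT x0 y = y - x0 - of_int (round (y - x0))"

definition Wbar :: "(real \<Rightarrow> real) \<Rightarrow> real \<Rightarrow> ereal" where
  "Wbar W x = (if x \<in> \<int> then \<infinity> else ereal (W x))"

text \<open>(W * rho)(x) = int W(x-y) d rho(y), as an extended integral
  (positive part minus negative part).\<close>
definition convT :: "(real \<Rightarrow> real) \<Rightarrow> real measure \<Rightarrow> real \<Rightarrow> ereal" where
  "convT W \<rho> x =
     enn2ereal (\<integral>\<^sup>+ y. e2ennreal (max 0 (Wbar W (x - y))) \<partial>\<rho>)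
   - enn2ereal (\<integral>\<^sup>+ y. e2ennreal (max 0 (- Wbar W (x - y))) \<partial>\<rho>)"

definition VU :: "(real \<Rightarrow> real) \<Rightarrow> (real \<Rightarrow> real) \<Rightarrow> real measure \<Rightarrow> real \<Rightarrow> ereal" where
  "VU U W \<rho> x = ereal (U x) + convT W \<rho> x"

text \<open>Essential infimum w.r.t. Lebesgue measure on T (periodic functions, so over [0,1]).\<close>
definition essinfT :: "(real \<Rightarrow> ereal) \<Rightarrow> ereal" where
  "essinfT f = Sup {z. AE x in lborel. x \<in> {0..1} \<longrightarrow> z \<le> f x}"

definition suppT :: "real measure \<Rightarrow> real set" where
  "suppT \<rho> = {x. \<forall>r>0. emeasure \<rho> {y. \<bar>liftT x y\<bar> < r} > 0}"

definition arcT :: "real \<Rightarrow> real \<Rightarrow> real set" where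
  "arcT x0 \<epsilon> = {y \<in> {0..<1}. \<bar>liftT x0 y\<bar> < \<epsilon>}"

definition restrT :: "real measure \<Rightarrow> real \<Rightarrow> real \<Rightarrow> real measure" where
  "restrT \<rho> x0 \<epsilon> = density \<rho> (indicator (arcT x0 \<epsilon>))"

definition tauT :: "real measure \<Rightarrow> real \<Rightarrow> real \<Rightarrow> real measure" where
  "tauT \<rho> x0 \<epsilon> = distr (restrT \<rho> x0 \<epsilon>) lborel (liftT x0)"

text \<open>rho_lambda as a (signed) set function on Borel sets of T.\<close>
definition rhoLam :: "real measure \<Rightarrow> real \<Rightarrow> real \<Rightarrow> real \<Rightarrow> real \<Rightarrow> real \<Rightarrow> real set \<Rightarrow> real" where
  "rhoLam \<rho> x0 \<epsilon> m1 m2 lam B =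
     measure \<rho> B + lam * (m1 * indicator B (frac (x0 - \<epsilon>)) + m2 * indicator B (frac (x0 + \<epsilon>))
                         - measure (restrT \<rho> x0 \<epsilon>) B)"

end

theory Submission
  imports Defs
begin

text \<open>
  Shift W by a constant B so that W + B \<ge> 0; then V[\<mu>](x) = U(x) - B + \<integral> (W + B)(x - y) d\<mu>(y)
  is a nonnegative integral, which is monotone and linear in \<mu>.
  For x at distance more than \<epsilon> from x0, the function u \<mapsto> W(x - x0 - u) is uniformly convex
  on [-\<epsilon>, \<epsilon>], so it lies below its chord by C1/2 (\<epsilon>^2 - u^2). Since the two point masses
  m1, m2 match the mass and first moment of \<tau>, integrating the chord against \<tau> gives exactly
  m1 W(x - x0 + \<epsilon>) + m2 W(x - x0 - \<epsilon>); hence moving the mass gains at least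
  \<lambda> C1/2 \<integral> (\<epsilon>^2 - u^2) d\<tau> > 0 there. Near x0 the new potential is still at least
  (1 - \<lambda>) V[\<rho>] + \<lambda> (inf U - B), which the gap c keeps above ess inf V[\<rho>] + c/2 for small \<lambda>.
  The two boundary points are Lebesgue-null, so the essential infimum strictly increases.
\<close>

lemma periodic_plus_of_int:
  fixes f :: "real \<Rightarrow> 'a"
  assumes "\<forall>x. f (x + 1) = f x"
  shows "f (x + of_int k) = f x"
proof -
  interpret periodic_fun_simple' f by standard (use assms in blast)
  show ?thesis by (rule plus_of_int)
qed

lemma below_chord_if_second_derivative_ge:
  fixes h h' h'' :: "real \<Rightarrow> real"
  assumes ab: "a < b"
    and h': "\<And>v. v \<in> {a..b} \<Longrightarrow> (h has_real_derivative h' v) (at v)"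
    and h'': "\<And>v. v \<in> {a..b} \<Longrightarrow> (h' has_real_derivative h'' v) (at v)"
    and C: "\<And>v. v \<in> {a..b} \<Longrightarrow> C \<le> h'' v"
    and u: "u \<in> {a..b}"
  shows "h u \<le> ((b - u) * h a + (u - a) * h b) / (b - a) - C / 2 * ((u - a) * (b - u))"
proof -
  define g where "g v = h v - C / 2 * v\<^sup>2" for v
  have "convex_on {a..b} g"
  proof (rule f''_ge0_imp_convex[where f'="\<lambda>v. h' v - C * v" and f''="\<lambda>v. h'' v - C"])
    fix v assume v: "v \<in> {a..b}"
    show "(g has_real_derivative h' v - C * v) (at v)"
      unfolding g_def using h'[OF v] by (auto intro!: derivative_eq_intros)
    show "((\<lambda>v. h' v - C * v) has_real_derivative h'' v - C) (at v)"
      using h''[OF v] by (auto intro!: derivative_eq_intros)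
    show "0 \<le> h'' v - C" using C[OF v] by simp
  qed simp
  moreover define t where "t = (u - a) / (b - a)"
  moreover have "0 \<le> t" "t \<le> 1"
    using u ab by (auto simp: t_def field_simps)
  moreover have u_eq: "u = (1 - t) * a + t * b"
  proof -
    have "t * (b - a) = u - a" using ab by (simp add: t_def)
    then show ?thesis by (simp add: algebra_simps)
  qed
  ultimately have "g u \<le> (1 - t) * g a + t * g b"
    using ab by (metis atLeastAtMost_iff convex_onD order_refl less_imp_le real_scaleR_def)
  then have "h u \<le> (1 - t) * h a + t * h b - C / 2 * ((1 - t) * a\<^sup>2 + t * b\<^sup>2 - u\<^sup>2)"
    by (simp add: g_def algebra_simps diff_divide_distrib)
  also have "(1 - t) * a\<^sup>2 + t * b\<^sup>2 - u\<^sup>2 = (u - a) * (b - u)"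
    unfolding u_eq by (simp add: algebra_simps power2_eq_square)
  also have "(1 - t) * h a + t * h b = ((b - u) * h a + (u - a) * h b) / (b - a)"
  proof -
    have "1 - t = (b - u) / (b - a)" using ab by (simp add: t_def field_simps)
    then show ?thesis by (simp add: t_def add_divide_distrib)
  qed
  finally show ?thesis .
qed

lemma borel_measurable_differentiable_off_Ints:
  fixes W W' :: "real \<Rightarrow> real"
  assumes "\<forall>x. x \<notin> \<int> \<longrightarrow> (W has_real_derivative W' x) (at x)"
  shows "W \<in> borel_measurable borel"
proof (rule borel_measurable_continuous_countable_exceptions[OF countable_int])
  show "continuous_on (- \<int>) W"
    using assms by (intro continuous_at_imp_continuous_on) (auto intro: DERIV_isCont)
qed

lemma borel_measurable_Wbar:
  assumes [measurable]: "W \<in> borel_measurable borel"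
  shows "Wbar W \<in> borel_measurable borel"
proof -
  have [measurable]: "\<int> \<in> sets (borel :: real measure)" by (simp add: closed_Ints)
  show ?thesis unfolding Wbar_def[abs_def] by measurable
qed

lemma Wbar_periodic:
  assumes "\<forall>x. W (x + 1) = W x"
  shows "\<forall>x. Wbar W (x + 1) = Wbar W x"
proof
  fix x :: real
  have "x + 1 \<in> \<int> \<longleftrightarrow> x \<in> \<int>"
    by (metis Ints_1 Ints_add Ints_diff add_diff_cancel)
  then show "Wbar W (x + 1) = Wbar W x" using assms by (simp add: Wbar_def)
qed

lemma bounded_below_periodic_convex:
  fixes W W' W'' :: "real \<Rightarrow> real"
  assumes W_per: "\<forall>x. W (x + 1) = W x"
    and W_deriv: "\<forall>x. x \<notin> \<int> \<longrightarrow> (W has_real_derivative W' x) (at x)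
                   \<and> (W' has_real_derivative W'' x) (at x) \<and> 0 \<le> W'' x"
  shows "\<exists>B\<ge>0. \<forall>t. t \<notin> \<int> \<longrightarrow> - B \<le> W t"
proof -
  have not_Int: "s \<notin> \<int>" if "s \<in> {0<..<1}" for s :: real
    using that by (auto elim!: Ints_cases)
  have convex: "convex_on {0<..<1} W"
    using W_deriv not_Int by (intro f''_ge0_imp_convex[where f'=W' and f''=W'']) auto
  define B where "B = \<bar>W (1/2)\<bar> + \<bar>W' (1/2)\<bar>"
  have bound: "- B \<le> W s" if s: "s \<in> {0<..<1}" for s
  proof -
    have "W' (1/2) * (s - 1/2) \<le> W s - W (1/2)"
    proof (rule convex_on_imp_above_tangent[OF convex])
      have "(W has_real_derivative W' (1/2)) (at (1/2))" using W_deriv not_Int[of "1/2"] by auto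
      then show "(W has_real_derivative W' (1/2)) (at (1/2) within {0<..<1})"
        by (rule has_field_derivative_at_within)
    qed (use s in auto)
    moreover have "\<bar>W' (1/2) * (s - 1/2)\<bar> \<le> \<bar>W' (1/2)\<bar>"
      using s by (auto simp: abs_mult intro!: mult_left_le)
    ultimately show ?thesis unfolding B_def by linarith
  qed
  have "- B \<le> W t" if "t \<notin> \<int>" for t
  proof -
    have "frac t \<in> {0<..<1}"
      using that frac_lt_1[of t] frac_ge_0[of t] frac_eq_0_iff[of t] by fastforce
    moreover have "W t = W (frac t)"
      using periodic_plus_of_int[OF W_per, of "frac t" "\<lfloor>t\<rfloor>"] by (simp add: frac_def)
    ultimately show ?thesis using bound by simp
  qed
  moreover have "0 \<le> B" by (simp add: B_def)
  ultimately show ?thesis by blast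
qed

lemma nn_integral_pos_minus_neg_eq_shift:
  fixes f :: "'a \<Rightarrow> ereal" and B :: real
  assumes M: "prob_space M" and f[measurable]: "f \<in> borel_measurable M"
    and B: "0 \<le> B" "\<And>y. - ereal B \<le> f y"
  shows "enn2ereal (\<integral>\<^sup>+ y. e2ennreal (max 0 (f y)) \<partial>M) - enn2ereal (\<integral>\<^sup>+ y. e2ennreal (max 0 (- f y)) \<partial>M)
       = enn2ereal (\<integral>\<^sup>+ y. e2ennreal (f y + ereal B) \<partial>M) - ereal B"
proof -
  interpret prob_space M by (rule M)
  define p where "p = (\<lambda>y. e2ennreal (max 0 (f y)))"
  define n where "n = (\<lambda>y. e2ennreal (max 0 (- f y)))"
  define g where "g = (\<lambda>y. e2ennreal (f y + ereal B))"
  have [measurable]: "p \<in> borel_measurable M" "n \<in> borel_measurable M" "g \<in> borel_measurable M"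
    unfolding p_def n_def g_def by measurable
  have pointwise: "g y + n y = p y + ennreal B" for y
  proof (cases "f y")
    case (real r)
    with B(2)[of y] have "- B \<le> r" by simp
    with real B(1) show ?thesis
      by (cases "0 \<le> r") (simp_all add: g_def n_def p_def max_def ennreal_plus[symmetric] del: ennreal_plus)
  qed (use B(2)[of y] in \<open>simp_all add: g_def n_def p_def\<close>)
  have n_le: "n y \<le> ennreal B" for y
    using B(2)[of y] by (cases "f y") (auto simp: n_def max_def intro!: ennreal_leI)
  have "integral\<^sup>N M g + integral\<^sup>N M n = (\<integral>\<^sup>+ y. g y + n y \<partial>M)"
    by (simp add: nn_integral_add)
  also have "\<dots> = integral\<^sup>N M p + ennreal B"
    by (simp add: pointwise nn_integral_add emeasure_space_1)
  finally have sum_eq: "enn2ereal (integral\<^sup>N M g) + enn2ereal (integral\<^sup>N M n)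
      = enn2ereal (integral\<^sup>N M p) + ereal B"
    using B(1) by (metis enn2ereal_ennreal plus_ennreal.rep_eq)
  have "integral\<^sup>N M n \<le> (\<integral>\<^sup>+ y. ennreal B \<partial>M)" by (intro nn_integral_mono n_le)
  then have "integral\<^sup>N M n \<le> ennreal B" by (simp add: emeasure_space_1)
  then obtain r where "enn2ereal (integral\<^sup>N M n) = ereal r"
    by (cases "integral\<^sup>N M n") (auto simp: top_unique)
  with sum_eq show ?thesis
    unfolding g_def[symmetric] n_def[symmetric] p_def[symmetric]
    by (cases "enn2ereal (integral\<^sup>N M g)"; cases "enn2ereal (integral\<^sup>N M p)") auto
qed

lemma essinfT_ge:
  fixes f :: "real \<Rightarrow> ereal"
  assumes "AE x in lborel. x \<in> {0..1} \<longrightarrow> z \<le> f x"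
  shows "z \<le> essinfT f"
  unfolding essinfT_def using assms by (intro Sup_upper) simp

lemma AE_essinfT_le: "AE x in lborel. x \<in> {0..1} \<longrightarrow> essinfT f \<le> f x"
proof -
  define S where "S = {z. AE x in lborel. x \<in> {0..1} \<longrightarrow> z \<le> f x}"
  have "-\<infinity> \<in> S" by (simp add: S_def)
  then obtain g :: "nat \<Rightarrow> ereal" where g: "range g \<subseteq> S" "Sup S = (SUP i. g i)"
    using Sup_countable_SUP[of S] by blast
  then have "\<forall>i. AE x in lborel. x \<in> {0..1} \<longrightarrow> g i \<le> f x"
    by (auto simp: S_def)
  then have "AE x in lborel. \<forall>i. x \<in> {0..1} \<longrightarrow> g i \<le> f x"
    by (subst AE_all_countable) simp
  then show ?thesis
    by eventually_elim (use g(2) in \<open>auto simp: essinfT_def S_def intro: SUP_least\<close>)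
qed

lemma essinfT_less_PInf:
  fixes f :: "real \<Rightarrow> ereal"
  assumes "AE x in lborel. x \<in> {0..1} \<longrightarrow> f x < \<infinity>"
  shows "essinfT f < \<infinity>"
proof (rule ccontr)
  assume "\<not> essinfT f < \<infinity>"
  have "AE x in lborel. x \<notin> {0..1::real}"
    using AE_essinfT_le[of f] assms
    by eventually_elim (use \<open>\<not> essinfT f < \<infinity>\<close> in auto)
  then have "{0..1::real} \<in> null_sets lborel"
    by (subst AE_iff_null_sets) auto
  then show False by (auto simp: null_sets_def)
qed

lemma nn_integral_translate_lborel:
  fixes h :: "real \<Rightarrow> ennreal"
  assumes "h \<in> borel_measurable borel"
  shows "(\<integral>\<^sup>+ x. h x \<partial>lborel) = (\<integral>\<^sup>+ x. h (t + x) \<partial>lborel)"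
  using nn_integral_real_affine[OF assms, of 1 t] by simp

lemma nn_integral_periodic_shift_le:
  fixes F :: "real \<Rightarrow> ennreal"
  assumes F[measurable]: "F \<in> borel_measurable borel"
    and F_per: "\<forall>t. F (t + 1) = F t" and y: "y \<in> {0..1}"
  shows "(\<integral>\<^sup>+ x. F (x - y) * indicator {0..1} x \<partial>lborel) \<le> 2 * (\<integral>\<^sup>+ t. F t * indicator {0..1} t \<partial>lborel)"
proof -
  define K where "K = (\<integral>\<^sup>+ t. F t * indicator {0..1} t \<partial>lborel)"
  have "(\<integral>\<^sup>+ x. F (x - y) * indicator {0..1} x \<partial>lborel) = (\<integral>\<^sup>+ t. F t * indicator {0..1} (y + t) \<partial>lborel)"
    by (subst nn_integral_translate_lborel[where t=y]) auto
  also have "\<dots> \<le> (\<integral>\<^sup>+ t. F t * indicator {-1..0} t + F t * indicator {0..1} t \<partial>lborel)"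
    using y by (intro nn_integral_mono) (auto split: split_indicator)
  also have "\<dots> = (\<integral>\<^sup>+ t. F t * indicator {-1..0} t \<partial>lborel) + K"
    unfolding K_def by (intro nn_integral_add) auto
  also have "(\<integral>\<^sup>+ t. F t * indicator {-1..0} t \<partial>lborel) = (\<integral>\<^sup>+ s. F (-1 + s) * indicator {-1..0} (-1 + s) \<partial>lborel)"
    by (subst nn_integral_translate_lborel[where t="-1"]) auto
  also have "\<dots> = K"
    unfolding K_def using F_per[rule_format, of "-1 + _"]
    by (intro nn_integral_cong) (auto split: split_indicator)
  finally show ?thesis by (simp add: K_def mult_2)
qed

lemma AE_nn_integral_periodic_convolution_finite:
  fixes F :: "real \<Rightarrow> ennreal" and \<rho> :: "real measure"
  assumes \<rho>: "finite_measure \<rho>" "sets \<rho> = sets borel" "AE y in \<rho>. y \<in> {0..1}"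
    and F[measurable]: "F \<in> borel_measurable borel"
    and F_per: "\<forall>t. F (t + 1) = F t"
    and F_int: "(\<integral>\<^sup>+ t. F t * indicator {0..1} t \<partial>lborel) < \<infinity>"
  shows "AE x in lborel. x \<in> {0..1} \<longrightarrow> (\<integral>\<^sup>+ y. F (x - y) \<partial>\<rho>) < \<infinity>"
proof -
  interpret R: finite_measure \<rho> by (rule \<rho>(1))
  interpret pair_sigma_finite lborel \<rho> ..
  define K where "K = (\<integral>\<^sup>+ t. F t * indicator {0..1} t \<partial>lborel)"
  have joint[measurable]: "(\<lambda>(x, y). F (x - y) * indicator {0..1} x) \<in> borel_measurable (lborel \<Otimes>\<^sub>M \<rho>)"
    unfolding measurable_cong_sets[OF sets_pair_measure_cong[OF sets_lborel \<rho>(2)] refl] by measurable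
  have "(\<integral>\<^sup>+ x. (\<integral>\<^sup>+ y. F (x - y) * indicator {0..1} x \<partial>\<rho>) \<partial>lborel)
      = (\<integral>\<^sup>+ y. (\<integral>\<^sup>+ x. F (x - y) * indicator {0..1} x \<partial>lborel) \<partial>\<rho>)"
    using Fubini'[of "\<lambda>x y. F (x - y) * indicator {0..1} x"] joint by simp
  also have "\<dots> \<le> (\<integral>\<^sup>+ y. 2 * K \<partial>\<rho>)"
    using \<rho>(3) unfolding K_def
    by (intro nn_integral_mono_AE) (elim eventually_mono, rule nn_integral_periodic_shift_le[OF F F_per])
  also have "\<dots> < \<infinity>"
  proof -
    have "emeasure \<rho> (space \<rho>) < \<infinity>" by (simp add: less_top[symmetric])
    then show ?thesis using F_int by (simp add: K_def ennreal_mult_less_top)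
  qed
  finally have "(\<integral>\<^sup>+ x. (\<integral>\<^sup>+ y. F (x - y) * indicator {0..1} x \<partial>\<rho>) \<partial>lborel) \<noteq> \<infinity>"
    by simp
  from nn_integral_PInf_AE[OF _ this] show ?thesis
    using R.borel_measurable_nn_integral_fst[OF joint]
    by (auto elim!: eventually_mono simp: less_top)
qed

lemma nn_integral_Wbar_shift_finite:
  fixes W :: "real \<Rightarrow> real"
  assumes [measurable]: "W \<in> borel_measurable borel" and W_int: "set_integrable lborel {0..1} W"
  shows "(\<integral>\<^sup>+ t. e2ennreal (Wbar W t + ereal B) * indicator {0..1} t \<partial>lborel) < \<infinity>"
proof -
  have "AE t in lborel. t \<notin> \<int>"
    by (intro AE_not_in countable_imp_null_set_lborel countable_int)
  then have "AE t in lborel. e2ennreal (Wbar W t + ereal B) * indicator {0..1} t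
      \<le> ennreal (norm (indicator {0..1} t *\<^sub>R W t)) + ennreal \<bar>B\<bar> * indicator {0..1} t"
    by eventually_elim
      (auto simp: Wbar_def ennreal_plus[symmetric] simp del: ennreal_plus intro!: ennreal_leI split: split_indicator)
  then have "(\<integral>\<^sup>+ t. e2ennreal (Wbar W t + ereal B) * indicator {0..1} t \<partial>lborel)
      \<le> (\<integral>\<^sup>+ t. ennreal (norm (indicator {0..1} t *\<^sub>R W t)) + ennreal \<bar>B\<bar> * indicator {0..1} t \<partial>lborel)"
    by (rule nn_integral_mono_AE)
  also have "\<dots> = (\<integral>\<^sup>+ t. ennreal (norm (indicator {0..1} t *\<^sub>R W t)) \<partial>lborel) + ennreal \<bar>B\<bar>"
    by (simp add: nn_integral_add nn_integral_cmult_indicator)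
  also have "\<dots> < \<infinity>"
    using W_int by (simp add: set_integrable_def integrable_iff_bounded)
  finally show ?thesis .
qed

lemma borel_measurable_liftT[measurable]: "liftT x0 \<in> borel_measurable borel"
  unfolding liftT_def[abs_def] round_def by measurable

lemma liftT_decomp: "y = x0 + liftT x0 y + of_int (round (y - x0))"
  by (simp add: liftT_def)

lemma abs_liftT_le: "\<bar>liftT x0 y\<bar> \<le> 1/2"
  using of_int_round_ge[of "y - x0"] of_int_round_le[of "y - x0"] unfolding liftT_def by linarith

lemma liftT_eq: "\<bar>y - x0 - of_int k\<bar> < 1/2 \<Longrightarrow> liftT x0 y = y - x0 - of_int k"
  using round_unique'[of "y - x0" k] by (simp add: liftT_def)

lemma abs_liftT_triangle:
  assumes "\<bar>liftT x0 x\<bar> + \<bar>liftT x y\<bar> < 1/2"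
  shows "\<bar>liftT x0 y\<bar> \<le> \<bar>liftT x0 x\<bar> + \<bar>liftT x y\<bar>"
proof -
  have "y - x0 - of_int (round (x - x0) + round (y - x)) = liftT x0 x + liftT x y"
    by (simp add: liftT_def)
  with assms have "liftT x0 y = liftT x0 x + liftT x y"
    using liftT_eq[of y x0 "round (x - x0) + round (y - x)"] by linarith
  then show ?thesis by simp
qed

lemma not_Int_if_abs_liftT_gt:
  assumes "e < \<bar>liftT x0 x\<bar>" "\<bar>u\<bar> \<le> e" "e < 1/2"
  shows "x - x0 - u \<notin> \<int>"
proof
  assume "x - x0 - u \<in> \<int>"
  then obtain k where k: "x - x0 - u = of_int k" by (auto elim: Ints_cases)
  with assms have "liftT x0 x = x - x0 - of_int k" by (intro liftT_eq) (simp add: algebra_simps)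
  with k assms show False by auto
qed

lemma Wbar_minus_frac:
  assumes "\<forall>x. W (x + 1) = W x"
  shows "Wbar W (x - frac z) = Wbar W (x - z)"
  using periodic_plus_of_int[OF Wbar_periodic[OF assms], of "x - z" "\<lfloor>z\<rfloor>"]
  by (simp add: frac_def algebra_simps)

lemma Wbar_minus_liftT:
  assumes "\<forall>x. W (x + 1) = W x"
  shows "Wbar W (x - y) = Wbar W (x - x0 - liftT x0 y)"
  using periodic_plus_of_int[OF Wbar_periodic[OF assms], of "x - y" "round (y - x0)"]
  by (simp add: liftT_def algebra_simps)

lemma AE_abs_liftT_neq: "AE x in lborel. \<bar>liftT x0 x\<bar> \<noteq> e"
proof -
  have "{x. \<bar>liftT x0 x\<bar> = e} \<subseteq> range (\<lambda>k::int. x0 + e + of_int k) \<union> range (\<lambda>k::int. x0 - e + of_int k)"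
  proof
    fix x assume "x \<in> {x. \<bar>liftT x0 x\<bar> = e}"
    then have "liftT x0 x = e \<or> liftT x0 x = - e" by auto
    then show "x \<in> range (\<lambda>k::int. x0 + e + of_int k) \<union> range (\<lambda>k::int. x0 - e + of_int k)"
      using liftT_decomp[of x x0] by (metis (no_types, lifting) UnI1 UnI2 diff_conv_add_uminus rangeI)
  qed
  then show ?thesis
    by (intro AE_I'[OF countable_imp_null_set_lborel[of "range _ \<union> range _"]]) auto
qed

lemma VU_periodic:
  assumes "\<forall>x. U (x + 1) = U x" "\<forall>x. W (x + 1) = W x"
  shows "\<forall>x. VU U W M (x + 1) = VU U W M x"
proof -
  have "Wbar W (x + 1 - y) = Wbar W (x - y)" for x y
    using Wbar_periodic[OF assms(2), rule_format, of "x - y"] by (simp add: algebra_simps)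
  then show ?thesis using assms(1) by (simp add: VU_def convT_def)
qed

lemma VU_eq_shifted:
  fixes W :: "real \<Rightarrow> real"
  assumes M: "isTprob M" and [measurable]: "W \<in> borel_measurable borel"
    and B: "0 \<le> B" "\<forall>t. t \<notin> \<int> \<longrightarrow> - B \<le> W t"
  shows "VU U W M x = ereal (U x - B) + enn2ereal (\<integral>\<^sup>+ y. e2ennreal (Wbar W (x - y) + ereal B) \<partial>M)"
proof -
  have [measurable]: "Wbar W \<in> borel_measurable borel" by (rule borel_measurable_Wbar) simp
  have "sets M = sets borel" using M by (simp add: isTprob_def)
  then have "(\<lambda>y. Wbar W (x - y)) \<in> borel_measurable M"
    unfolding measurable_cong_sets[OF _ refl] by measurable
  moreover have "- ereal B \<le> Wbar W (x - y)" for y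
    using B by (simp add: Wbar_def)
  ultimately have "convT W M x = enn2ereal (\<integral>\<^sup>+ y. e2ennreal (Wbar W (x - y) + ereal B) \<partial>M) - ereal B"
    unfolding convT_def using M B(1)
    by (intro nn_integral_pos_minus_neg_eq_shift) (auto simp: isTprob_def)
  then show ?thesis unfolding VU_def
    by (cases "enn2ereal (\<integral>\<^sup>+ y. e2ennreal (Wbar W (x - y) + ereal B) \<partial>M)") (auto simp: algebra_simps)
qed

definition plus_measure :: "'a measure \<Rightarrow> 'a measure \<Rightarrow> 'a measure" where
  "plus_measure M N = measure_of (space M) (sets M) (\<lambda>A. emeasure M A + emeasure N A)"

lemma sets_plus_measure [simp, measurable_cong]: "sets (plus_measure M N) = sets M"
  unfolding plus_measure_def by (simp add: sets.sigma_sets_eq sets.space_closed)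

lemma emeasure_plus_measure:
  assumes N: "sets N = sets M" and A: "A \<in> sets M"
  shows "emeasure (plus_measure M N) A = emeasure M A + emeasure N A"
  unfolding plus_measure_def
proof (rule emeasure_measure_of_sigma[OF sets.sigma_algebra_axioms _ _ A])
  show "positive (sets M) (\<lambda>A. emeasure M A + emeasure N A)"
    by (simp add: positive_def)
  show "countably_additive (sets M) (\<lambda>A. emeasure M A + emeasure N A)"
  proof (rule countably_additiveI)
    fix F :: "nat \<Rightarrow> _" assume F: "range F \<subseteq> sets M" "disjoint_family F"
    then show "(\<Sum>i. emeasure M (F i) + emeasure N (F i)) = emeasure M (\<Union> (range F)) + emeasure N (\<Union> (range F))"
      using N by (simp add: suminf_add[symmetric] suminf_emeasure)
  qed
qed

lemma nn_integral_plus_measure: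
  assumes N: "sets N = sets M" and f: "f \<in> borel_measurable M"
  shows "(\<integral>\<^sup>+ x. f x \<partial>plus_measure M N) = (\<integral>\<^sup>+ x. f x \<partial>M) + (\<integral>\<^sup>+ x. f x \<partial>N)"
  using f
proof (induction rule: borel_measurable_induct)
  case (cong f g)
  moreover have "space N = space M" "space (plus_measure M N) = space M"
    using N sets_eq_imp_space_eq sets_plus_measure by metis+
  ultimately show ?case by (metis (no_types, lifting) nn_integral_cong)
next
  case (set A)
  then show ?case
    using N by (simp add: emeasure_plus_measure del: sets_plus_measure)
next
  case (mult u c)
  then show ?case
    using N by (simp add: nn_integral_cmult distrib_left measurable_cong_sets[OF N refl])
next
  case (add u v)
  then show ?case
    using N by (simp add: nn_integral_add algebra_simps measurable_cong_sets[OF N refl])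
next
  case (seq U)
  have meas: "\<And>i. U i \<in> borel_measurable N" "\<And>i. U i \<in> borel_measurable (plus_measure M N)"
    using seq N by (simp_all add: measurable_cong_sets[OF N refl])
  have mono: "incseq (\<lambda>i. integral\<^sup>N K (U i))" for K
    using seq by (auto simp: incseq_def le_fun_def intro!: nn_integral_mono)
  have "(\<integral>\<^sup>+ x. (SUP i. U i) x \<partial>plus_measure M N) = (SUP i. integral\<^sup>N (plus_measure M N) (U i))"
    unfolding SUP_apply using seq meas by (intro nn_integral_monotone_convergence_SUP) auto
  also have "\<dots> = (SUP i. integral\<^sup>N M (U i) + integral\<^sup>N N (U i))"
    using seq by simp
  also have "\<dots> = (SUP i. integral\<^sup>N M (U i)) + (SUP i. integral\<^sup>N N (U i))"
    by (rule ennreal_SUP_add[OF mono mono])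
  also have "\<dots> = (\<integral>\<^sup>+ x. (SUP i. U i) x \<partial>M) + (\<integral>\<^sup>+ x. (SUP i. U i) x \<partial>N)"
    unfolding SUP_apply using seq meas
    by (simp add: nn_integral_monotone_convergence_SUP[of U M] nn_integral_monotone_convergence_SUP[of U N])
  finally show ?case .
qed

locale arc_transfer =
  fixes \<rho> :: "real measure" and x0 \<epsilon> m1 m2 :: real
  assumes rho: "isTprob \<rho>"
    and eps: "0 < \<epsilon>" "\<epsilon> < 1/2"
    and m_pos: "0 < m1" "0 < m2"
    and moments: "\<forall>k\<in>{0, 1::nat}. m1 * (- \<epsilon>) ^ k + m2 * \<epsilon> ^ k - (\<integral>u. u ^ k \<partial>(tauT \<rho> x0 \<epsilon>)) = 0"
    and supp: "\<exists>x\<in>suppT \<rho>. \<bar>liftT x0 x\<bar> < \<epsilon> / 2"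
begin

sublocale rho: prob_space \<rho>
  using rho by (simp add: isTprob_def)

abbreviation "arc_set \<equiv> arcT x0 \<epsilon>"
abbreviation "left_end \<equiv> frac (x0 - \<epsilon>)"
abbreviation "right_end \<equiv> frac (x0 + \<epsilon>)"

text \<open>\<open>transfer \<lambda>\<close> is the measure \<rho>_\<lambda> of the statement.\<close>

definition transfer :: "real \<Rightarrow> real measure" where
  "transfer lam = plus_measure (density \<rho> (\<lambda>y. ennreal (1 - lam * indicator arc_set y)))
     (plus_measure (scale_measure (ennreal (lam * m1)) (return borel left_end))
                   (scale_measure (ennreal (lam * m2)) (return borel right_end)))"

definition arc_spread :: real where
  "arc_spread = (\<integral>y. indicator arc_set y * (\<epsilon>\<^sup>2 - (liftT x0 y)\<^sup>2) \<partial>\<rho>)"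

lemma sets_rho [simp, measurable_cong]: "sets \<rho> = sets borel"
  using rho by (simp add: isTprob_def)

lemma space_rho [simp]: "space \<rho> = UNIV"
  using sets_eq_imp_space_eq[OF sets_rho] by simp

lemma emeasure_rho_outside: "emeasure \<rho> (UNIV - {0..<1}) = 0"
  using rho by (simp add: isTprob_def)

lemma arc_sets [measurable]: "arc_set \<in> sets borel"
proof -
  have "arc_set = {y \<in> space borel. y \<in> {0..<1} \<and> \<bar>liftT x0 y\<bar> < \<epsilon>}"
    by (auto simp: arcT_def)
  also have "\<dots> \<in> sets borel" by measurable
  finally show ?thesis .
qed

lemma abs_liftT_less_if_arc: "y \<in> arc_set \<Longrightarrow> \<bar>liftT x0 y\<bar> < \<epsilon>"
  by (simp add: arcT_def)

lemma sets_transfer [simp, measurable_cong]: "sets (transfer lam) = sets borel"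
  by (simp add: transfer_def)

lemma space_transfer [simp]: "space (transfer lam) = UNIV"
  using sets_eq_imp_space_eq[OF sets_transfer] by simp

lemma nn_integral_transfer:
  assumes [measurable]: "f \<in> borel_measurable borel"
  shows "(\<integral>\<^sup>+ y. f y \<partial>transfer lam) = (\<integral>\<^sup>+ y. ennreal (1 - lam * indicator arc_set y) * f y \<partial>\<rho>)
            + ennreal (lam * m1) * f left_end + ennreal (lam * m2) * f right_end"
proof -
  have [measurable_cong]: "sets (scale_measure r (return borel z)) = sets borel" for r and z :: real
    by simp
  show ?thesis
    unfolding transfer_def
    by (simp add: nn_integral_plus_measure nn_integral_density nn_integral_scale_measure
        nn_integral_return add.assoc)
qed

lemma integrable_bounded:
  fixes f :: "real \<Rightarrow> real"
  assumes "f \<in> borel_measurable borel" "\<And>y. \<bar>f y\<bar> \<le> B"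
  shows "integrable \<rho> f"
  using assms by (intro rho.integrable_const_bound[where B=B]) auto

lemma integral_tauT:
  fixes f :: "real \<Rightarrow> real"
  assumes [measurable]: "f \<in> borel_measurable borel"
  shows "(\<integral>u. f u \<partial>tauT \<rho> x0 \<epsilon>) = (\<integral>y. indicator arc_set y * f (liftT x0 y) \<partial>\<rho>)"
proof -
  have restr: "restrT \<rho> x0 \<epsilon> = density \<rho> (\<lambda>y. ennreal (indicator arc_set y))"
    by (simp add: restrT_def ennreal_indicator)
  have "(\<integral>u. f u \<partial>tauT \<rho> x0 \<epsilon>) = (\<integral>y. f (liftT x0 y) \<partial>restrT \<rho> x0 \<epsilon>)"
    unfolding tauT_def restr by (rule integral_distr) (simp_all add: measurable_cong_sets[OF _ sets_lborel])
  also have "\<dots> = (\<integral>y. indicator arc_set y *\<^sub>R f (liftT x0 y) \<partial>\<rho>)"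
    unfolding restr by (rule integral_density) auto
  finally show ?thesis by simp
qed

lemma arc_mass: "measure \<rho> arc_set = m1 + m2"
  using moments integral_tauT[of "\<lambda>u. 1"] by simp

lemma arc_first_moment: "(\<integral>y. indicator arc_set y * liftT x0 y \<partial>\<rho>) = \<epsilon> * (m2 - m1)"
  using moments integral_tauT[of "\<lambda>u. u"] by (simp add: algebra_simps)

lemma emeasure_arc_pos: "0 < emeasure \<rho> arc_set"
proof -
  obtain z where z: "z \<in> suppT \<rho>" "\<bar>liftT x0 z\<bar> < \<epsilon> / 2" using supp by blast
  define S where "S = {y. \<bar>liftT z y\<bar> < \<epsilon> / 2}"
  have "0 < emeasure \<rho> S" using z(1) half_gt_zero[OF eps(1)] unfolding suppT_def S_def by blast
  have [measurable]: "S \<in> sets borel"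
  proof -
    have "S = {y \<in> space borel. \<bar>liftT z y\<bar> < \<epsilon> / 2}" by (simp add: S_def)
    also have "\<dots> \<in> sets borel" by measurable
    finally show ?thesis .
  qed
  have "S \<inter> {0..<1} \<subseteq> arc_set"
  proof
    fix y assume y: "y \<in> S \<inter> {0..<1}"
    then have "\<bar>liftT x0 y\<bar> < \<epsilon>"
      using abs_liftT_triangle[of x0 z y] z(2) eps by (simp add: S_def)
    with y show "y \<in> arc_set" by (simp add: arcT_def)
  qed
  then have "emeasure \<rho> (S \<inter> {0..<1}) \<le> emeasure \<rho> arc_set"
    by (rule emeasure_mono) (simp only: sets_rho arc_sets)
  moreover have "emeasure \<rho> S \<le> emeasure \<rho> (S \<inter> {0..<1}) + emeasure \<rho> (UNIV - {0..<1})"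
    by (rule order_trans[OF emeasure_mono emeasure_subadditive]) auto
  ultimately show ?thesis
    using \<open>0 < emeasure \<rho> S\<close> emeasure_rho_outside by simp
qed

lemma integrable_arc_liftT:
  fixes g :: "real \<Rightarrow> real"
  assumes [measurable]: "g \<in> borel_measurable borel" and g: "\<And>u. \<bar>u\<bar> \<le> 1/2 \<Longrightarrow> \<bar>g u\<bar> \<le> B"
  shows "integrable \<rho> (\<lambda>y. indicator arc_set y * g (liftT x0 y))"
proof (rule integrable_bounded[where B="\<bar>B\<bar>"])
  show "\<bar>indicator arc_set y * g (liftT x0 y)\<bar> \<le> \<bar>B\<bar>" for y
    using g[OF abs_liftT_le[of x0 y]] by (auto simp: indicator_def intro: order_trans[OF abs_ge_zero])
qed simp

lemma integrable_arc_spread_term: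
  "integrable \<rho> (\<lambda>y. indicator arc_set y * (\<epsilon>\<^sup>2 - (liftT x0 y)\<^sup>2))"
proof (rule integrable_arc_liftT[where B="\<epsilon>\<^sup>2 + 1"])
  fix u :: real assume "\<bar>u\<bar> \<le> 1/2"
  then have "0 \<le> u\<^sup>2" "u\<^sup>2 \<le> 1" by (simp_all add: abs_square_le_1)
  then show "\<bar>\<epsilon>\<^sup>2 - u\<^sup>2\<bar> \<le> \<epsilon>\<^sup>2 + 1"
    unfolding abs_le_iff using zero_le_power2[of \<epsilon>] by (intro conjI; linarith)
qed simp

lemma arc_spread_pos: "0 < arc_spread"
proof -
  define f where "f = (\<lambda>y. indicator arc_set y * (\<epsilon>\<^sup>2 - (liftT x0 y)\<^sup>2))"
  have pos: "0 < f y" if "y \<in> arc_set" for y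
  proof -
    have "\<bar>liftT x0 y\<bar> < \<bar>\<epsilon>\<bar>" using abs_liftT_less_if_arc[OF that] eps by simp
    then have "(liftT x0 y)\<^sup>2 < \<epsilon>\<^sup>2" by (metis abs_le_square_iff not_le)
    with that show ?thesis by (simp add: f_def)
  qed
  have nonneg: "0 \<le> f y" for y
    using pos[of y] by (cases "y \<in> arc_set") (auto simp: f_def)
  have "integrable \<rho> f"
    unfolding f_def using integrable_arc_spread_term .
  moreover have "\<not> (AE y in \<rho>. f y = 0)"
  proof
    assume "AE y in \<rho>. f y = 0"
    then have "AE y in \<rho>. y \<notin> arc_set" by eventually_elim (use pos in force)
    then have "arc_set \<in> null_sets \<rho>" by (subst AE_iff_null_sets) auto
    then show False using emeasure_arc_pos by auto
  qed
  ultimately have "integral\<^sup>L \<rho> f \<noteq> 0"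
    using integral_nonneg_eq_0_iff_AE[of \<rho> f] nonneg by auto
  moreover have "0 \<le> integral\<^sup>L \<rho> f" using nonneg by simp
  ultimately show ?thesis unfolding arc_spread_def f_def[symmetric] by simp
qed

lemma emeasure_transfer:
  assumes lam: "0 \<le> lam" "lam \<le> 1" and [measurable]: "B \<in> sets borel"
  shows "emeasure (transfer lam) B = ennreal (measure \<rho> B - lam * measure \<rho> (arc_set \<inter> B)
           + lam * m1 * indicator B left_end + lam * m2 * indicator B right_end)"
proof -
  have int: "integrable \<rho> (\<lambda>y. indicator K y :: real)" if "K \<in> sets borel" for K
    using that by (intro integrable_bounded[where B=1]) auto
  have "emeasure (transfer lam) B = (\<integral>\<^sup>+ y. indicator B y \<partial>transfer lam)"
    by (rule nn_integral_indicator[symmetric]) simp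
  also have "\<dots> = (\<integral>\<^sup>+ y. ennreal (indicator B y - lam * indicator (arc_set \<inter> B) y) \<partial>\<rho>)
      + ennreal (lam * m1 * indicator B left_end) + ennreal (lam * m2 * indicator B right_end)"
    unfolding nn_integral_transfer[OF borel_measurable_indicator[OF assms(3)]]
    by (intro arg_cong2[where f="(+)"] nn_integral_cong) (auto simp: indicator_def)
  also have "(\<integral>\<^sup>+ y. ennreal (indicator B y - lam * indicator (arc_set \<inter> B) y) \<partial>\<rho>)
      = ennreal (measure \<rho> B - lam * measure \<rho> (arc_set \<inter> B))"
    using lam int by (subst nn_integral_eq_integral) (auto split: split_indicator)
  finally show ?thesis
    using lam m_pos rho.finite_measure_mono[of "arc_set \<inter> B" B]
      mult_left_le_one_le[OF measure_nonneg lam(1,2), of \<rho> "arc_set \<inter> B"]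
    by (simp add: ennreal_plus[symmetric] del: ennreal_plus)
qed

lemma measure_restrT:
  assumes [measurable]: "B \<in> sets borel"
  shows "measure (restrT \<rho> x0 \<epsilon>) B = measure \<rho> (arc_set \<inter> B)"
proof -
  have "emeasure (restrT \<rho> x0 \<epsilon>) B = (\<integral>\<^sup>+ y. indicator arc_set y * indicator B y \<partial>\<rho>)"
    unfolding restrT_def by (rule emeasure_density) auto
  also have "\<dots> = (\<integral>\<^sup>+ y. indicator (arc_set \<inter> B) y \<partial>\<rho>)"
    by (rule nn_integral_cong) (simp split: split_indicator)
  also have "\<dots> = emeasure \<rho> (arc_set \<inter> B)"
    by (rule nn_integral_indicator) simp
  finally show ?thesis by (simp add: measure_def)
qed

lemma measure_transfer:
  assumes "0 \<le> lam" "lam \<le> 1" "B \<in> sets borel"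
  shows "measure (transfer lam) B = rhoLam \<rho> x0 \<epsilon> m1 m2 lam B"
proof -
  have "lam * measure \<rho> (arc_set \<inter> B) \<le> measure \<rho> B"
    using assms rho.finite_measure_mono[of "arc_set \<inter> B" B]
      mult_left_le_one_le[OF measure_nonneg assms(1,2), of \<rho> "arc_set \<inter> B"] by simp
  then have "0 \<le> measure \<rho> B - lam * measure \<rho> (arc_set \<inter> B)
      + lam * m1 * indicator B left_end + lam * m2 * indicator B right_end"
    using assms(1) m_pos by (intro add_nonneg_nonneg) simp_all
  then show ?thesis
    using assms unfolding measure_def[of "transfer lam"] emeasure_transfer[OF assms]
    by (simp add: rhoLam_def measure_restrT algebra_simps)
qed

lemma isTprob_transfer:
  assumes "0 \<le> lam" "lam \<le> 1"
  shows "isTprob (transfer lam)"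
proof -
  have "emeasure (transfer lam) (space (transfer lam)) = 1"
    using emeasure_transfer[OF assms, of UNIV] arc_mass rho.prob_space by (simp add: algebra_simps)
  moreover have "arc_set \<inter> (UNIV - {0..<1}) = {}" by (auto simp: arcT_def)
  moreover have "measure \<rho> (UNIV - {0..<1}) = 0"
    using emeasure_rho_outside by (simp add: measure_def)
  ultimately show ?thesis
    using emeasure_transfer[OF assms, of "UNIV - {0..<1}"]
    by (auto simp: isTprob_def prob_spaceI frac_lt_1)
qed

lemma nn_integral_arc_convex_le:
  fixes h h' h'' :: "real \<Rightarrow> real"
  assumes h': "\<And>u. u \<in> {-\<epsilon>..\<epsilon>} \<Longrightarrow> (h has_real_derivative h' u) (at u)"
    and h'': "\<And>u. u \<in> {-\<epsilon>..\<epsilon>} \<Longrightarrow> (h' has_real_derivative h'' u) (at u)"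
    and C: "0 \<le> C" "\<And>u. u \<in> {-\<epsilon>..\<epsilon>} \<Longrightarrow> C \<le> h'' u"
    and h_nonneg: "\<And>u. u \<in> {-\<epsilon>..\<epsilon>} \<Longrightarrow> 0 \<le> h u"
  shows "(\<integral>\<^sup>+ y. indicator arc_set y * ennreal (h (liftT x0 y)) \<partial>\<rho>) + ennreal (C / 2 * arc_spread)
           \<le> ennreal (m1 * h (-\<epsilon>) + m2 * h \<epsilon>)"
proof -
  define \<alpha> where "\<alpha> = (h (-\<epsilon>) + h \<epsilon>) / 2"
  define \<beta> where "\<beta> = (h \<epsilon> - h (-\<epsilon>)) / (2 * \<epsilon>)"
  define q where "q u = \<alpha> + \<beta> * u - C / 2 * (\<epsilon>\<^sup>2 - u\<^sup>2)" for u
  have chord: "h u \<le> q u" if "u \<in> {-\<epsilon>..\<epsilon>}" for u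
  proof -
    have "h u \<le> ((\<epsilon> - u) * h (-\<epsilon>) + (u - -\<epsilon>) * h \<epsilon>) / (\<epsilon> - -\<epsilon>) - C / 2 * ((u - -\<epsilon>) * (\<epsilon> - u))"
      using eps(1) h' h'' C(2) that by (intro below_chord_if_second_derivative_ge) auto
    also have "\<dots> = q u"
      using eps(1) by (simp add: q_def \<alpha>_def \<beta>_def field_simps power2_eq_square)
    finally show ?thesis .
  qed
  define \<phi> where "\<phi> y = indicator arc_set y * q (liftT x0 y)" for y
  have on_arc: "0 \<le> h (liftT x0 y) \<and> h (liftT x0 y) \<le> q (liftT x0 y)" if "y \<in> arc_set" for y
  proof -
    have "liftT x0 y \<in> {-\<epsilon>..\<epsilon>}" using abs_liftT_less_if_arc[OF that] by auto
    then show ?thesis using chord h_nonneg by blast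
  qed
  have h_le_\<phi>: "indicator arc_set y * ennreal (h (liftT x0 y)) \<le> ennreal (\<phi> y)" for y
    using on_arc[of y] by (cases "y \<in> arc_set") (auto simp: \<phi>_def intro!: ennreal_leI)
  have \<phi>_nonneg: "0 \<le> \<phi> y" for y
    using on_arc[of y] by (cases "y \<in> arc_set") (auto simp: \<phi>_def)
  have \<phi>_eq: "\<phi> = (\<lambda>y. \<alpha> * indicator arc_set y + \<beta> * (indicator arc_set y * liftT x0 y)
      - C / 2 * (indicator arc_set y * (\<epsilon>\<^sup>2 - (liftT x0 y)\<^sup>2)))"
    by (auto simp: \<phi>_def q_def algebra_simps fun_eq_iff)
  have int_ind: "integrable \<rho> (\<lambda>y. indicator arc_set y :: real)"
    using integrable_arc_liftT[of "\<lambda>u. 1" 1] by simp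
  have int_lift: "integrable \<rho> (\<lambda>y. indicator arc_set y * liftT x0 y)"
    by (rule integrable_arc_liftT[where B=1]) auto
  have "integral\<^sup>L \<rho> \<phi> = \<alpha> * measure \<rho> arc_set + \<beta> * (\<epsilon> * (m2 - m1)) - C / 2 * arc_spread"
    unfolding \<phi>_eq arc_spread_def arc_first_moment[symmetric]
    using int_ind int_lift integrable_arc_spread_term by simp
  also have "\<dots> = m1 * h (-\<epsilon>) + m2 * h \<epsilon> - C / 2 * arc_spread"
    using eps(1) unfolding arc_mass \<alpha>_def \<beta>_def by (simp add: field_simps)
  finally have int_\<phi>: "integral\<^sup>L \<rho> \<phi> + C / 2 * arc_spread = m1 * h (-\<epsilon>) + m2 * h \<epsilon>"
    by simp
  have "(\<integral>\<^sup>+ y. indicator arc_set y * ennreal (h (liftT x0 y)) \<partial>\<rho>) \<le> (\<integral>\<^sup>+ y. ennreal (\<phi> y) \<partial>\<rho>)"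
    by (intro nn_integral_mono h_le_\<phi>)
  also have "\<dots> = ennreal (integral\<^sup>L \<rho> \<phi>)"
    using int_ind int_lift integrable_arc_spread_term \<phi>_nonneg
    by (intro nn_integral_eq_integral) (auto simp: \<phi>_eq)
  finally have "(\<integral>\<^sup>+ y. indicator arc_set y * ennreal (h (liftT x0 y)) \<partial>\<rho>) + ennreal (C / 2 * arc_spread)
      \<le> ennreal (integral\<^sup>L \<rho> \<phi>) + ennreal (C / 2 * arc_spread)"
    by (rule add_right_mono)
  also have "\<dots> = ennreal (m1 * h (-\<epsilon>) + m2 * h \<epsilon>)"
    using C(1) arc_spread_pos \<phi>_nonneg int_\<phi> by (simp add: ennreal_plus[symmetric] del: ennreal_plus)
  finally show ?thesis .
qed

lemma nn_integral_transfer_split: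
  assumes [measurable]: "f \<in> borel_measurable borel"
  shows "(\<integral>\<^sup>+ y. f y \<partial>transfer lam) = (\<integral>\<^sup>+ y. indicator (- arc_set) y * f y \<partial>\<rho>)
           + ennreal (1 - lam) * (\<integral>\<^sup>+ y. indicator arc_set y * f y \<partial>\<rho>)
           + ennreal (lam * m1) * f left_end + ennreal (lam * m2) * f right_end"
proof -
  have "(\<integral>\<^sup>+ y. ennreal (1 - lam * indicator arc_set y) * f y \<partial>\<rho>)
      = (\<integral>\<^sup>+ y. indicator (- arc_set) y * f y + ennreal (1 - lam) * (indicator arc_set y * f y) \<partial>\<rho>)"
    by (intro nn_integral_cong) (simp split: split_indicator)
  also have "\<dots> = (\<integral>\<^sup>+ y. indicator (- arc_set) y * f y \<partial>\<rho>)
      + ennreal (1 - lam) * (\<integral>\<^sup>+ y. indicator arc_set y * f y \<partial>\<rho>)"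
    by (simp add: nn_integral_add nn_integral_cmult)
  finally show ?thesis by (simp add: nn_integral_transfer)
qed

lemma nn_integral_split_arc:
  assumes [measurable]: "f \<in> borel_measurable borel"
  shows "(\<integral>\<^sup>+ y. f y \<partial>\<rho>) = (\<integral>\<^sup>+ y. indicator (- arc_set) y * f y \<partial>\<rho>) + (\<integral>\<^sup>+ y. indicator arc_set y * f y \<partial>\<rho>)"
  by (subst nn_integral_add[symmetric]) (auto intro!: nn_integral_cong split: split_indicator)

lemma nn_integral_transfer_ge:
  assumes lam: "0 \<le> lam" "lam \<le> 1" and [measurable]: "f \<in> borel_measurable borel"
  shows "ennreal (1 - lam) * (\<integral>\<^sup>+ y. f y \<partial>\<rho>) \<le> (\<integral>\<^sup>+ y. f y \<partial>transfer lam)"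
proof -
  have "ennreal (1 - lam) * (\<integral>\<^sup>+ y. indicator (- arc_set) y * f y \<partial>\<rho>)
      \<le> (\<integral>\<^sup>+ y. indicator (- arc_set) y * f y \<partial>\<rho>)"
    using mult_right_mono[of "ennreal (1 - lam)" 1] lam by (simp add: ennreal_le_1)
  then show ?thesis
    unfolding nn_integral_transfer_split[OF assms(3)] nn_integral_split_arc[OF assms(3)] distrib_left
    by (intro add_increasing2 add_mono) simp_all
qed

lemma nn_integral_transfer_convex_gain:
  fixes h h' h'' :: "real \<Rightarrow> real"
  assumes lam: "0 \<le> lam" "lam \<le> 1" and [measurable]: "f \<in> borel_measurable borel"
    and f: "\<And>y. y \<in> arc_set \<Longrightarrow> f y = ennreal (h (liftT x0 y))"
      "f left_end = ennreal (h (-\<epsilon>))" "f right_end = ennreal (h \<epsilon>)"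
    and h': "\<And>u. u \<in> {-\<epsilon>..\<epsilon>} \<Longrightarrow> (h has_real_derivative h' u) (at u)"
    and h'': "\<And>u. u \<in> {-\<epsilon>..\<epsilon>} \<Longrightarrow> (h' has_real_derivative h'' u) (at u)"
    and C: "0 \<le> C" "\<And>u. u \<in> {-\<epsilon>..\<epsilon>} \<Longrightarrow> C \<le> h'' u"
    and h_nonneg: "\<And>u. u \<in> {-\<epsilon>..\<epsilon>} \<Longrightarrow> 0 \<le> h u"
  shows "(\<integral>\<^sup>+ y. f y \<partial>\<rho>) + ennreal (lam * (C / 2 * arc_spread)) \<le> (\<integral>\<^sup>+ y. f y \<partial>transfer lam)"
proof -
  define J where "J = (\<integral>\<^sup>+ y. indicator arc_set y * f y \<partial>\<rho>)"
  have "J = (\<integral>\<^sup>+ y. indicator arc_set y * ennreal (h (liftT x0 y)) \<partial>\<rho>)"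
    unfolding J_def using f(1) by (intro nn_integral_cong) (simp split: split_indicator)
  then have "J + ennreal (C / 2 * arc_spread) \<le> ennreal (m1 * h (-\<epsilon>) + m2 * h \<epsilon>)"
    using nn_integral_arc_convex_le[OF h' h'' C h_nonneg] by simp
  then have "ennreal lam * (J + ennreal (C / 2 * arc_spread)) \<le> ennreal lam * ennreal (m1 * h (-\<epsilon>) + m2 * h \<epsilon>)"
    by (rule mult_left_mono) simp
  moreover have "ennreal lam * (J + ennreal (C / 2 * arc_spread)) = ennreal lam * J + ennreal (lam * (C / 2 * arc_spread))"
    by (simp only: ennreal_mult'[OF lam(1)] distrib_left)
  moreover have "ennreal lam * ennreal (m1 * h (-\<epsilon>) + m2 * h \<epsilon>)
      = ennreal (lam * m1) * f left_end + ennreal (lam * m2) * f right_end"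
    using lam m_pos h_nonneg[of "-\<epsilon>"] h_nonneg[of \<epsilon>] eps(1)
    by (simp add: f(2,3) ennreal_mult[symmetric] ennreal_plus[symmetric] distrib_left mult.assoc del: ennreal_plus)
  moreover have "J = ennreal (1 - lam) * J + ennreal lam * J"
    using lam by (simp add: distrib_right[symmetric] ennreal_plus[symmetric] del: ennreal_plus)
  ultimately have "J + ennreal (lam * (C / 2 * arc_spread))
      \<le> ennreal (1 - lam) * J + (ennreal (lam * m1) * f left_end + ennreal (lam * m2) * f right_end)"
    by (metis (no_types, lifting) add.assoc add_left_mono)
  then show ?thesis
    unfolding nn_integral_transfer_split[OF assms(3)] nn_integral_split_arc[OF assms(3)] J_def[symmetric]
    by (metis (no_types, lifting) add.assoc add_left_mono)
qed

end

locale convex_interaction = arc_transfer +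
  fixes W W' W'' :: "real \<Rightarrow> real" and C1 Bw :: real
  assumes W_per: "\<forall>x. W (x + 1) = W x"
    and W_int: "set_integrable lborel {0..1} W"
    and W_deriv: "\<forall>x. x \<notin> \<int> \<longrightarrow> (W has_real_derivative W' x) (at x)
                   \<and> (W' has_real_derivative W'' x) (at x) \<and> C1 \<le> W'' x"
    and C1: "0 < C1"
    and Bw: "0 \<le> Bw" "\<forall>t. t \<notin> \<int> \<longrightarrow> - Bw \<le> W t"
begin

definition kernel :: "real \<Rightarrow> real \<Rightarrow> ennreal" where
  "kernel x y = e2ennreal (Wbar W (x - y) + ereal Bw)"

lemma borel_measurable_W [measurable]: "W \<in> borel_measurable borel"
  using W_deriv by (intro borel_measurable_differentiable_off_Ints[where W'=W']) blast

lemma borel_measurable_kernel [measurable]: "kernel x \<in> borel_measurable borel"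
proof -
  have [measurable]: "Wbar W \<in> borel_measurable borel" by (rule borel_measurable_Wbar) simp
  show ?thesis unfolding kernel_def[abs_def] by measurable
qed

lemma VU_eq_kernel: "isTprob M \<Longrightarrow> VU U W M x = ereal (U x - Bw) + enn2ereal (\<integral>\<^sup>+ y. kernel x y \<partial>M)"
  unfolding kernel_def using Bw by (intro VU_eq_shifted) simp_all

lemma AE_nn_integral_kernel_finite: "AE x in lborel. x \<in> {0..1} \<longrightarrow> (\<integral>\<^sup>+ y. kernel x y \<partial>\<rho>) < \<infinity>"
proof -
  have [measurable]: "Wbar W \<in> borel_measurable borel" by (rule borel_measurable_Wbar) simp
  have "AE y in \<rho>. y \<in> {0..1}"
    using emeasure_rho_outside by (intro AE_I[of _ _ "UNIV - {0..<1}"]) auto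
  then show ?thesis
    unfolding kernel_def
    using Wbar_periodic[OF W_per] nn_integral_Wbar_shift_finite[OF borel_measurable_W W_int]
    by (intro AE_nn_integral_periodic_convolution_finite[where F="\<lambda>t. e2ennreal (Wbar W t + ereal Bw)"])
      (simp_all add: rho.finite_measure_axioms)
qed

lemma nn_integral_transfer_kernel_gain:
  assumes lam: "0 \<le> lam" "lam \<le> 1" and x: "\<epsilon> < \<bar>liftT x0 x\<bar>"
  shows "(\<integral>\<^sup>+ y. kernel x y \<partial>\<rho>) + ennreal (lam * (C1 / 2 * arc_spread)) \<le> (\<integral>\<^sup>+ y. kernel x y \<partial>transfer lam)"
proof (rule nn_integral_transfer_convex_gain[OF lam borel_measurable_kernel])
  define d where "d = x - x0"
  have not_Int: "d - u \<notin> \<int>" if "u \<in> {-\<epsilon>..\<epsilon>}" for u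
    using not_Int_if_abs_liftT_gt[OF x _ eps(2), of u] that by (simp add: d_def abs_le_iff)
  have kernel_eq: "kernel x y = ennreal (W (d - u) + Bw)" if "Wbar W (x - y) = Wbar W (d - u)" "u \<in> {-\<epsilon>..\<epsilon>}" for y u
    using that not_Int[OF that(2)] by (simp add: kernel_def Wbar_def)
  show "kernel x y = ennreal (W (d - liftT x0 y) + Bw)" if "y \<in> arc_set" for y
    using abs_liftT_less_if_arc[OF that] Wbar_minus_liftT[OF W_per, of x y x0]
    by (intro kernel_eq) (auto simp: d_def)
  show "kernel x left_end = ennreal (W (d - (-\<epsilon>)) + Bw)" "kernel x right_end = ennreal (W (d - \<epsilon>) + Bw)"
    by (rule kernel_eq; use eps(1) in \<open>simp add: Wbar_minus_frac[OF W_per] d_def algebra_simps\<close>)+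
  fix u assume u: "u \<in> {-\<epsilon>..\<epsilon>}"
  have inner: "((\<lambda>u. d - u) has_real_derivative -1) (at u)" by (auto intro!: derivative_eq_intros)
  show "((\<lambda>u. W (d - u) + Bw) has_real_derivative - W' (d - u)) (at u)"
    using DERIV_chain2[OF _ inner, of W "W' (d - u)"] W_deriv not_Int[OF u]
    by (auto intro!: derivative_eq_intros)
  show "((\<lambda>u. - W' (d - u)) has_real_derivative W'' (d - u)) (at u)"
    using DERIV_chain2[OF _ inner, of W' "W'' (d - u)"] W_deriv not_Int[OF u]
    by (auto intro!: derivative_eq_intros)
  show "C1 \<le> W'' (d - u)" "0 \<le> W (d - u) + Bw"
    using W_deriv Bw not_Int[OF u] by auto
qed (use C1 in simp)

lemma VU_transfer_ge_inside:
  assumes lam: "0 \<le> lam" "lam < 1" and v: "ereal v \<le> VU U W \<rho> x" and U: "Umin \<le> U x"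
  shows "ereal ((1 - lam) * v + lam * (Umin - Bw)) \<le> VU U W (transfer lam) x"
proof -
  define I where "I = (\<integral>\<^sup>+ y. kernel x y \<partial>\<rho>)"
  define I' where "I' = (\<integral>\<^sup>+ y. kernel x y \<partial>transfer lam)"
  have I'_ge: "ennreal (1 - lam) * I \<le> I'"
    unfolding I_def I'_def using lam by (intro nn_integral_transfer_ge) auto
  have V: "VU U W \<rho> x = ereal (U x - Bw) + enn2ereal I"
    and V': "VU U W (transfer lam) x = ereal (U x - Bw) + enn2ereal I'"
    using VU_eq_kernel rho isTprob_transfer lam by (simp_all add: I_def I'_def)
  show ?thesis
  proof (cases I)
    case (real i)
    with v V have "v \<le> U x - Bw + i" by simp
    then have "(1 - lam) * v \<le> (1 - lam) * (U x - Bw + i)"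
      using lam by (intro mult_left_mono) auto
    moreover have "lam * (Umin - Bw) \<le> lam * (U x - Bw)"
      using lam U by (intro mult_left_mono) auto
    ultimately have "ereal ((1 - lam) * v + lam * (Umin - Bw)) \<le> ereal (U x - Bw) + ereal ((1 - lam) * i)"
      by (simp add: algebra_simps)
    also have "ereal ((1 - lam) * i) \<le> enn2ereal I'"
      using I'_ge real lam by (simp add: ennreal_mult'[symmetric] less_eq_ennreal.rep_eq)
    finally show ?thesis
      unfolding V' by (simp add: add_left_mono)
  next
    case top
    with I'_ge lam have "I' = \<top>" by (simp add: ennreal_mult_top top_unique)
    then show ?thesis by (simp add: V')
  qed
qed

lemma VU_transfer_ge_outside:
  assumes lam: "0 \<le> lam" "lam \<le> 1" and x: "\<epsilon> < \<bar>liftT x0 x\<bar>"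
  shows "VU U W \<rho> x + ereal (lam * (C1 / 2 * arc_spread)) \<le> VU U W (transfer lam) x"
proof -
  have "enn2ereal (\<integral>\<^sup>+ y. kernel x y \<partial>\<rho>) + ereal (lam * (C1 / 2 * arc_spread))
      \<le> enn2ereal (\<integral>\<^sup>+ y. kernel x y \<partial>transfer lam)"
    using nn_integral_transfer_kernel_gain[OF lam x] lam C1 arc_spread_pos
    by (simp add: less_eq_ennreal.rep_eq plus_ennreal.rep_eq)
  then show ?thesis
    using VU_eq_kernel rho isTprob_transfer[OF lam] by (simp add: add.assoc add_left_mono)
qed

lemma essinfT_VU_finite:
  assumes "\<forall>x. Umin \<le> U x"
  shows "\<exists>e. essinfT (VU U W \<rho>) = ereal e \<and> Umin - Bw \<le> e"
proof -
  have "ereal (Umin - Bw) \<le> VU U W \<rho> x" for x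
    using assms VU_eq_kernel[OF rho, of U x]
    by (metis add.right_neutral add_mono enn2ereal_nonneg diff_right_mono ereal_less_eq(3))
  then have lower: "ereal (Umin - Bw) \<le> essinfT (VU U W \<rho>)"
    by (intro essinfT_ge) simp
  have "AE x in lborel. x \<in> {0..1} \<longrightarrow> VU U W \<rho> x < \<infinity>"
    using AE_nn_integral_kernel_finite
    by eventually_elim (auto simp: VU_eq_kernel[OF rho] less_top[symmetric] ennreal_cases)
  then have "essinfT (VU U W \<rho>) < \<infinity>" by (rule essinfT_less_PInf)
  with lower show ?thesis by (cases "essinfT (VU U W \<rho>)") auto
qed

lemma essinfT_VU_transfer_gt:
  assumes U_per: "\<forall>x. U (x + 1) = U x" and U_bdd: "\<forall>x. Umin \<le> U x" and c: "0 < c"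
    and gap: "\<forall>x\<in>{x0 - \<epsilon>..x0 + \<epsilon>}. VU U W \<rho> x \<ge> essinfT (VU U W \<rho>) + ereal c"
  shows "\<exists>lam0\<in>{0<..1}. \<forall>lam\<in>{0<..<lam0}. essinfT (VU U W \<rho>) < essinfT (VU U W (transfer lam))"
proof -
  obtain e where e: "essinfT (VU U W \<rho>) = ereal e" "Umin - Bw \<le> e"
    using essinfT_VU_finite[OF U_bdd] by blast
  define \<kappa> where "\<kappa> = C1 / 2 * arc_spread"
  have \<kappa>: "0 < \<kappa>" using C1 arc_spread_pos by (simp add: \<kappa>_def)
  define K where "K = e + c - (Umin - Bw)"
  have K: "c \<le> K" using e(2) by (simp add: K_def)
  define lam0 where "lam0 = min 1 (c / (2 * K))"
  have "lam0 \<in> {0<..1}" using c K by (simp add: lam0_def)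
  moreover have "essinfT (VU U W \<rho>) < essinfT (VU U W (transfer lam))" if lam: "lam \<in> {0<..<lam0}" for lam
  proof -
    have lam1: "0 \<le> lam" "lam < 1" using lam by (auto simp: lam0_def)
    have "lam * K \<le> c / (2 * K) * K"
      using lam K c by (intro mult_right_mono) (auto simp: lam0_def)
    then have lamK: "lam * K \<le> c / 2" using K c by simp
    define \<delta> where "\<delta> = min (c / 2) (lam * \<kappa>)"
    have "AE x in lborel. x \<in> {0..1} \<longrightarrow> ereal (e + \<delta>) \<le> VU U W (transfer lam) x"
      using AE_essinfT_le[of "VU U W \<rho>"] AE_abs_liftT_neq[of x0 \<epsilon>]
    proof eventually_elim
      case (elim x)
      show ?case
      proof
        assume "x \<in> {0..1}"
        with elim have V: "ereal e \<le> VU U W \<rho> x" "\<bar>liftT x0 x\<bar> \<noteq> \<epsilon>" using e by auto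
        show "ereal (e + \<delta>) \<le> VU U W (transfer lam) x"
        proof (cases "\<epsilon> < \<bar>liftT x0 x\<bar>")
          case True
          have "ereal (e + \<delta>) \<le> ereal e + ereal (lam * \<kappa>)" by (simp add: \<delta>_def)
          also have "\<dots> \<le> VU U W \<rho> x + ereal (lam * \<kappa>)" by (rule add_right_mono[OF V(1)])
          also have "\<dots> \<le> VU U W (transfer lam) x"
            unfolding \<kappa>_def using lam1 True by (intro VU_transfer_ge_outside) auto
          finally show ?thesis .
        next
          case False
          with V(2) have "x0 + liftT x0 x \<in> {x0 - \<epsilon>..x0 + \<epsilon>}" by auto
          moreover have "VU U W \<rho> x = VU U W \<rho> (x0 + liftT x0 x)"
            using periodic_plus_of_int[OF VU_periodic[OF U_per W_per, where M=\<rho>],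
                of "x0 + liftT x0 x" "round (x - x0)"]
              liftT_decomp[of x x0] by simp
          ultimately have "ereal (e + c) \<le> VU U W \<rho> x" using gap e by auto
          then have "ereal ((1 - lam) * (e + c) + lam * (Umin - Bw)) \<le> VU U W (transfer lam) x"
            using lam1 U_bdd by (intro VU_transfer_ge_inside) auto
          moreover have "e + \<delta> \<le> (1 - lam) * (e + c) + lam * (Umin - Bw)"
            using lamK by (simp add: \<delta>_def K_def algebra_simps)
          ultimately show ?thesis by (meson ereal_less_eq(3) order_trans)
        qed
      qed
    qed
    then have "ereal (e + \<delta>) \<le> essinfT (VU U W (transfer lam))" by (rule essinfT_ge)
    moreover have "0 < \<delta>" using c \<kappa> lam by (simp add: \<delta>_def)
    ultimately show ?thesis using e(1) by (metis ereal_less_eq(3) less_add_same_cancel1 less_ereal.simps(1) order_less_le_trans)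
  qed
  ultimately show ?thesis by blast
qed

end

theorem lemma3p4:
  fixes W U :: "real \<Rightarrow> real" and \<rho> :: "real measure"
    and x0 \<epsilon> c m1 m2 :: real
  assumes W_per: "\<forall>x. W (x + 1) = W x"
    and H1_L1: "set_integrable lborel {0..1} W"
    and H1_mean: "(LBINT x:{0..1}. W x) = 0"
    and H1_H4_C2: "\<exists>W' W'' C1. C1 > 0 \<and> (\<forall>x. x \<notin> \<int> \<longrightarrow>
              (W has_real_derivative W' x) (at x) \<and> (W' has_real_derivative W'' x) (at x)
              \<and> isCont W'' x \<and> W'' x \<ge> C1)"
    and H2: "\<forall>x. W (- x) = W x"
    and H3: "filterlim W at_top (at 0)"
    and U_per: "\<forall>x. U (x + 1) = U x"
    and U_bdd: "\<exists>b. \<forall>x. U x \<ge> b"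
    and rho: "isTprob \<rho>"
    and eps: "0 < \<epsilon>" "\<epsilon> < 1/2"
    and c: "c > 0"
    and gap: "\<forall>x\<in>{x0 - \<epsilon>..x0 + \<epsilon>}. VU U W \<rho> x \<ge> essinfT (VU U W \<rho>) + ereal c"
    and supp: "\<exists>x\<in>suppT \<rho>. \<bar>liftT x0 x\<bar> < \<epsilon> / 2"
    and m_pos: "m1 > 0" "m2 > 0"
    and moments: "\<forall>k\<in>{0, 1::nat}.
              m1 * (- \<epsilon>) ^ k + m2 * \<epsilon> ^ k - (\<integral>u. u ^ k \<partial>(tauT \<rho> x0 \<epsilon>)) = 0"
  shows "\<exists>lam0>0. \<forall>lam. 0 < lam \<and> lam < lam0 \<longrightarrow>
           (\<exists>\<mu>. isTprob \<mu> \<and> (\<forall>B\<in>sets borel. measure \<mu> B = rhoLam \<rho> x0 \<epsilon> m1 m2 lam B)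
                \<and> - essinfT (VU U W \<mu>) < - essinfT (VU U W \<rho>))"
proof -
  obtain W' W'' C1 where C1: "0 < C1" and W_deriv: "\<forall>x. x \<notin> \<int> \<longrightarrow>
      (W has_real_derivative W' x) (at x) \<and> (W' has_real_derivative W'' x) (at x) \<and> C1 \<le> W'' x"
    using H1_H4_C2 by blast
  obtain Bw where Bw: "0 \<le> Bw" "\<forall>t. t \<notin> \<int> \<longrightarrow> - Bw \<le> W t"
    using bounded_below_periodic_convex[OF W_per, of W' W''] W_deriv C1 by fastforce
  obtain Umin where Umin: "\<forall>x. Umin \<le> U x" using U_bdd by blast
  interpret convex_interaction \<rho> x0 \<epsilon> m1 m2 W W' W'' C1 Bw
    using rho eps m_pos moments supp W_per H1_L1 W_deriv C1 Bw by unfold_locales auto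
  obtain lam0 where lam0: "lam0 \<in> {0<..1}"
    and gt: "\<forall>lam\<in>{0<..<lam0}. essinfT (VU U W \<rho>) < essinfT (VU U W (transfer lam))"
    using essinfT_VU_transfer_gt[OF U_per Umin c gap] by blast
  have "isTprob (transfer lam) \<and> (\<forall>B\<in>sets borel. measure (transfer lam) B = rhoLam \<rho> x0 \<epsilon> m1 m2 lam B)
      \<and> - essinfT (VU U W (transfer lam)) < - essinfT (VU U W \<rho>)" if "0 < lam" "lam < lam0" for lam
    using that lam0 gt isTprob_transfer measure_transfer by (auto simp: ereal_uminus_less_reorder)
  with lam0 show ?thesis by auto
qed

end
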